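(* Let $\langle X, \leq_1, \leq_2\rangle$ be a lattice frame, and let $L_X$ be the Urquhart complex algebra of $X$ (the complete bounded lattice of stable subsets of $X$). Let $X_{L_X}$ be the set of maximal filter–ideal pairs of $L_X$, ordered by $\leq_1$ and $\leq_2$ as in the Urquhart canonical frame. Then $X$ is embeddable into the Urquhart canonical frame $\langle X_{L_X}, \leq_1, \leq_2\rangle$: there is an injective map $k: X \to X_{L_X}$ such that for $i = 1,2$ and all $x,y \in X$, $x \leq_i y$ implies $k(x) \leq_i k(y)$.
   Context: A doubly ordered frame is a structure $\langle X, \leq_1, \leq_2\rangle$ where $\leq_1,\leq_2$ are quasiorders (reflexive and transitive relations) on $X$ such that $x \leq_1 y$ and $x \leq_2 y$ together imply $x = y$. Write $\uparrow_i x = \{y : x \leq_i y\}$. A lattice frame is a doubly ordered frame satisfying: (LF1) each element of $X$ is below a $\leq_1$-maximal element and below a $\leq_2$-maximal element; (LF2) if $x \not\leq_1 y$ then there is $z$ with $y \leq_1 z$ such that for all $w$, $x \leq_1 w$ implies $z \not\leq_2 w$; (LF3) if $x \not\leq_2 y$ then there is $z$ with $y \leq_2 z$ such that for all $w$, $x \leq_2 w$ implies $z \not\leq_1 w$. For $Y \subseteq X$ let $l(Y) = \{x : \uparrow_1 x \cap Y = \emptyset\}$ and $r(Y) = \{x : \uparrow_2 x \cap Y = \emptyset\}$. $Y$ is stable if $Y = l(r(Y))$; $L_X$ is the set of stable sets, with operations $Y \wedge Z = Y \cap Z$ and $Y \vee Z = l(r(Y \cup Z))$, bottom $\emptyset$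 and top $X$; this is a complete bounded lattice (the Urquhart complex algebra of $X$). For a bounded lattice $L$, a filter–ideal pair is $\langle F, I\rangle$ with $F$ a proper filter, $I$ a proper ideal, and $F \cap I = \emptyset$. It is maximal if no proper filter strictly containing $F$ is disjoint from $I$ and no proper ideal strictly containing $I$ is disjoint from $F$. For a maximal pair $x = \langle F, I\rangle$ write $x_1 = F$, $x_2 = I$. The Urquhart canonical frame of $L$ is $\langle X_L, \leq_1, \leq_2\rangle$, where $X_L$ is the set of maximal filter–ideal pairs and $x \leq_i y$ iff $x_i \subseteq y_i$. *)

theory Defs
  imports Main
begin

definition quasiorder_on :: "'a set \<Rightarrow> ('a \<Rightarrow> 'a \<Rightarrow> bool) \<Rightarrow> bool" where
  "quasiorder_on X le \<longleftrightarrow>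
     (\<forall>x\<in>X. le x x) \<and> (\<forall>x\<in>X. \<forall>y\<in>X. \<forall>z\<in>X. le x y \<longrightarrow> le y z \<longrightarrow> le x z)"

definition doubly_ordered_frame ::
  "'a set \<Rightarrow> ('a \<Rightarrow> 'a \<Rightarrow> bool) \<Rightarrow> ('a \<Rightarrow> 'a \<Rightarrow> bool) \<Rightarrow> bool" where
  "doubly_ordered_frame X le1 le2 \<longleftrightarrow>
     quasiorder_on X le1 \<and> quasiorder_on X le2 \<and>
     (\<forall>x\<in>X. \<forall>y\<in>X. le1 x y \<longrightarrow> le2 x y \<longrightarrow> x = y)"

definition qmaximal :: "'a set \<Rightarrow> ('a \<Rightarrow> 'a \<Rightarrow> bool) \<Rightarrow> 'a \<Rightarrow> bool" where
  "qmaximal X le m \<longleftrightarrow> m \<in> X \<and> (\<forall>z\<in>X. le m z \<longrightarrow> le z m)"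

definition lattice_frame ::
  "'a set \<Rightarrow> ('a \<Rightarrow> 'a \<Rightarrow> bool) \<Rightarrow> ('a \<Rightarrow> 'a \<Rightarrow> bool) \<Rightarrow> bool" where
  "lattice_frame X le1 le2 \<longleftrightarrow>
     doubly_ordered_frame X le1 le2 \<and>
     \<comment> \<open>LF1\<close>
     (\<forall>x\<in>X. (\<exists>m. qmaximal X le1 m \<and> le1 x m) \<and> (\<exists>m. qmaximal X le2 m \<and> le2 x m)) \<and>
     \<comment> \<open>LF2\<close>
     (\<forall>x\<in>X. \<forall>y\<in>X. \<not> le1 x y \<longrightarrow>
        (\<exists>z\<in>X. le1 y z \<and> (\<forall>w\<in>X. le1 x w \<longrightarrow> \<not> le2 z w))) \<and>
     \<comment> \<open>LF3\<close>
     (\<forall>x\<in>X. \<forall>y\<in>X. \<not> le2 x y \<longrightarrow>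
        (\<exists>z\<in>X. le2 y z \<and> (\<forall>w\<in>X. le2 x w \<longrightarrow> \<not> le1 z w)))"

definition up :: "'a set \<Rightarrow> ('a \<Rightarrow> 'a \<Rightarrow> bool) \<Rightarrow> 'a \<Rightarrow> 'a set" where
  "up X le x = {y \<in> X. le x y}"

definition lop :: "'a set \<Rightarrow> ('a \<Rightarrow> 'a \<Rightarrow> bool) \<Rightarrow> 'a set \<Rightarrow> 'a set" where
  "lop X le1 Y = {x \<in> X. up X le1 x \<inter> Y = {}}"

definition rop :: "'a set \<Rightarrow> ('a \<Rightarrow> 'a \<Rightarrow> bool) \<Rightarrow> 'a set \<Rightarrow> 'a set" where
  "rop X le2 Y = {x \<in> X. up X le2 x \<inter> Y = {}}"

definition stable_sets ::
  "'a set \<Rightarrow> ('a \<Rightarrow> 'a \<Rightarrow> bool) \<Rightarrow> ('a \<Rightarrow> 'a \<Rightarrow> bool) \<Rightarrow> 'a set set" where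
  "stable_sets X le1 le2 = {Y. Y \<subseteq> X \<and> Y = lop X le1 (rop X le2 Y)}"

definition sjoin ::
  "'a set \<Rightarrow> ('a \<Rightarrow> 'a \<Rightarrow> bool) \<Rightarrow> ('a \<Rightarrow> 'a \<Rightarrow> bool) \<Rightarrow> 'a set \<Rightarrow> 'a set \<Rightarrow> 'a set" where
  "sjoin X le1 le2 Y Z = lop X le1 (rop X le2 (Y \<union> Z))"

definition lat_filter :: "'b set \<Rightarrow> ('b \<Rightarrow> 'b \<Rightarrow> bool) \<Rightarrow> ('b \<Rightarrow> 'b \<Rightarrow> 'b) \<Rightarrow> 'b set \<Rightarrow> bool" where
  "lat_filter L le meet F \<longleftrightarrow> F \<subseteq> L \<and> F \<noteq> {} \<and>
     (\<forall>a\<in>F. \<forall>b\<in>L. le a b \<longrightarrow> b \<in> F) \<and> (\<forall>a\<in>F. \<forall>b\<in>F. meet a b \<in> F)"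

definition lat_ideal :: "'b set \<Rightarrow> ('b \<Rightarrow> 'b \<Rightarrow> bool) \<Rightarrow> ('b \<Rightarrow> 'b \<Rightarrow> 'b) \<Rightarrow> 'b set \<Rightarrow> bool" where
  "lat_ideal L le join I \<longleftrightarrow> I \<subseteq> L \<and> I \<noteq> {} \<and>
     (\<forall>a\<in>I. \<forall>b\<in>L. le b a \<longrightarrow> b \<in> I) \<and> (\<forall>a\<in>I. \<forall>b\<in>I. join a b \<in> I)"

definition proper_filter ::
  "'b set \<Rightarrow> ('b \<Rightarrow> 'b \<Rightarrow> bool) \<Rightarrow> ('b \<Rightarrow> 'b \<Rightarrow> 'b) \<Rightarrow> 'b set \<Rightarrow> bool" where
  "proper_filter L le meet F \<longleftrightarrow> lat_filter L le meet F \<and> F \<noteq> L"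

definition proper_ideal ::
  "'b set \<Rightarrow> ('b \<Rightarrow> 'b \<Rightarrow> bool) \<Rightarrow> ('b \<Rightarrow> 'b \<Rightarrow> 'b) \<Rightarrow> 'b set \<Rightarrow> bool" where
  "proper_ideal L le join I \<longleftrightarrow> lat_ideal L le join I \<and> I \<noteq> L"

definition filter_ideal_pair ::
  "'b set \<Rightarrow> ('b \<Rightarrow> 'b \<Rightarrow> bool) \<Rightarrow> ('b \<Rightarrow> 'b \<Rightarrow> 'b) \<Rightarrow> ('b \<Rightarrow> 'b \<Rightarrow> 'b)
    \<Rightarrow> 'b set \<times> 'b set \<Rightarrow> bool" where
  "filter_ideal_pair L le meet join p \<longleftrightarrow>
     proper_filter L le meet (fst p) \<and> proper_ideal L le join (snd p) \<and>
     fst p \<inter> snd p = {}"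

definition maximal_fi_pair ::
  "'b set \<Rightarrow> ('b \<Rightarrow> 'b \<Rightarrow> bool) \<Rightarrow> ('b \<Rightarrow> 'b \<Rightarrow> 'b) \<Rightarrow> ('b \<Rightarrow> 'b \<Rightarrow> 'b)
    \<Rightarrow> 'b set \<times> 'b set \<Rightarrow> bool" where
  "maximal_fi_pair L le meet join p \<longleftrightarrow>
     filter_ideal_pair L le meet join p \<and>
     (\<forall>G. proper_filter L le meet G \<and> fst p \<subset> G \<longrightarrow> G \<inter> snd p \<noteq> {}) \<and>
     (\<forall>J. proper_ideal L le join J \<and> snd p \<subset> J \<longrightarrow> fst p \<inter> J \<noteq> {})"

definition canonical_points_of_complex_algebra ::
  "'a set \<Rightarrow> ('a \<Rightarrow> 'a \<Rightarrow> bool) \<Rightarrow> ('a \<Rightarrow> 'a \<Rightarrow> bool) \<Rightarrow> ('a set set \<times> 'a set set) set" where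
  "canonical_points_of_complex_algebra X le1 le2 =
     {p. maximal_fi_pair (stable_sets X le1 le2) (\<subseteq>) (\<inter>) (sjoin X le1 le2) p}"

definition can_le1 :: "'b set \<times> 'b set \<Rightarrow> 'b set \<times> 'b set \<Rightarrow> bool" where
  "can_le1 p q \<longleftrightarrow> fst p \<subseteq> fst q"

definition can_le2 :: "'b set \<times> 'b set \<Rightarrow> 'b set \<times> 'b set \<Rightarrow> bool" where
  "can_le2 p q \<longleftrightarrow> snd p \<subseteq> snd q"

end

theory Submission
  imports Defs
begin

text \<open>Send x to k(x) = (F, I), where F consists of the stable sets containing x and I of
  the stable sets Y with x \<in> r(Y). Stable sets are \<le>1-up-closed and r-polars are
  \<le>2-up-closed, which makes k monotone and (F, I) a filter-ideal pair. LF2 makes the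
  principal up-set \<up>1x stable and LF3 gives r(l(\<up>2x)) = \<up>2x. These two sets separate
  distinct points, since \<up>1x \<inter> \<up>2x = {x}, and they give maximality: a filter properly
  extending F contains some Y with x \<notin> Y, hence Y \<inter> \<up>1x, whose r-polar contains x; dually
  an ideal properly extending I contains the join of some Y with x \<notin> r(Y) and l(\<up>2x),
  and that join contains x.\<close>

definition upclosed :: "'a set \<Rightarrow> ('a \<Rightarrow> 'a \<Rightarrow> bool) \<Rightarrow> 'a set \<Rightarrow> bool" where
  "upclosed X le A \<longleftrightarrow> A \<subseteq> X \<and> (\<forall>a\<in>A. \<forall>b\<in>X. le a b \<longrightarrow> b \<in> A)"

lemma upclosedD: "upclosed X le A \<Longrightarrow> a \<in> A \<Longrightarrow> b \<in> X \<Longrightarrow> le a b \<Longrightarrow> b \<in> A"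
  unfolding upclosed_def by blast

lemma upclosed_Un: "upclosed X le A \<Longrightarrow> upclosed X le B \<Longrightarrow> upclosed X le (A \<union> B)"
  unfolding upclosed_def by blast

lemma quasiorder_onD:
  assumes "quasiorder_on X le"
  shows quasiorder_on_refl: "x \<in> X \<Longrightarrow> le x x"
    and quasiorder_on_trans: "x \<in> X \<Longrightarrow> y \<in> X \<Longrightarrow> z \<in> X \<Longrightarrow> le x y \<Longrightarrow> le y z \<Longrightarrow> le x z"
  using assms unfolding quasiorder_on_def by blast+

lemma mem_up_iff: "y \<in> up X le x \<longleftrightarrow> y \<in> X \<and> le x y"
  unfolding up_def by blast

lemma up_subset: "up X le x \<subseteq> X"
  unfolding up_def by blast

lemma up_upclosed:
  assumes "quasiorder_on X le" "x \<in> X"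
  shows "upclosed X le (up X le x)"
  using quasiorder_on_trans[OF assms(1)] assms(2) unfolding upclosed_def up_def by blast

text \<open>The polars l and r of the paper differ only in the quasiorder they use, so the facts
  about them are proved once, for lop.\<close>

lemma rop_eq_lop: "rop = lop"
  unfolding rop_def lop_def by (intro ext) (rule refl)

lemma mem_lop_iff: "x \<in> lop X le Y \<longleftrightarrow> x \<in> X \<and> (\<forall>y\<in>X. le x y \<longrightarrow> y \<notin> Y)"
  unfolding lop_def up_def by blast

lemma lop_subset: "lop X le Y \<subseteq> X"
  unfolding lop_def by blast

lemma lop_antimono: "A \<subseteq> B \<Longrightarrow> lop X le B \<subseteq> lop X le A"
  unfolding lop_def by blast

lemma lop_upclosed:
  assumes "quasiorder_on X le"
  shows "upclosed X le (lop X le Y)"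
  unfolding upclosed_def
proof (intro conjI ballI impI lop_subset)
  fix a b assume "a \<in> lop X le Y" "b \<in> X" "le a b"
  with assms show "b \<in> lop X le Y"
    unfolding mem_lop_iff quasiorder_on_def by blast
qed

lemma upclosed_subset_lop_lop:
  assumes "quasiorder_on X le'" and "upclosed X le W"
  shows "W \<subseteq> lop X le (lop X le' W)"
  using assms unfolding upclosed_def subset_eq mem_lop_iff quasiorder_on_def by blast

text \<open>This is where the separation axioms LF2 and LF3 enter: they make principal
  up-sets closed under the polar closure.\<close>

lemma lop_lop_up:
  assumes le: "quasiorder_on X le" and le': "quasiorder_on X le'" and x: "x \<in> X"
    and separation: "\<And>y. y \<in> X \<Longrightarrow> \<not> le x y \<Longrightarrow>
      \<exists>z\<in>X. le y z \<and> (\<forall>w\<in>X. le x w \<longrightarrow> \<not> le' z w)"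
  shows "lop X le (lop X le' (up X le x)) = up X le x"
proof
  show "lop X le (lop X le' (up X le x)) \<subseteq> up X le x"
  proof
    fix y assume y: "y \<in> lop X le (lop X le' (up X le x))"
    then have "y \<in> X" by (simp add: mem_lop_iff)
    show "y \<in> up X le x"
    proof (rule ccontr)
      assume "y \<notin> up X le x"
      with \<open>y \<in> X\<close> have "\<not> le x y"
        by (simp add: mem_up_iff)
      with \<open>y \<in> X\<close> obtain z where z: "z \<in> X" "le y z" "\<forall>w\<in>X. le x w \<longrightarrow> \<not> le' z w"
        using separation by blast
      then have "z \<in> lop X le' (up X le x)"
        unfolding mem_lop_iff mem_up_iff by blast
      with y z(1,2) show False
        unfolding mem_lop_iff by blast
    qed
  qed
  show "up X le x \<subseteq> lop X le (lop X le' (up X le x))"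
    using upclosed_subset_lop_lop[OF le' up_upclosed[OF le x]] .
qed

locale doubly_ordered =
  fixes X :: "'a set" and le1 le2 :: "'a \<Rightarrow> 'a \<Rightarrow> bool"
  assumes doubly_ordered_frame: "doubly_ordered_frame X le1 le2"
begin

abbreviation "L \<equiv> stable_sets X le1 le2"
abbreviation "l \<equiv> lop X le1"
abbreviation "r \<equiv> rop X le2"
abbreviation "join \<equiv> sjoin X le1 le2"

lemma quasiorder1: "quasiorder_on X le1"
  and quasiorder2: "quasiorder_on X le2"
  and le12_antisym: "x \<in> X \<Longrightarrow> y \<in> X \<Longrightarrow> le1 x y \<Longrightarrow> le2 x y \<Longrightarrow> x = y"
  using doubly_ordered_frame unfolding doubly_ordered_frame_def by blast+

lemma mem_rop_iff: "x \<in> r Y \<longleftrightarrow> x \<in> X \<and> (\<forall>y\<in>X. le2 x y \<longrightarrow> y \<notin> Y)"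
  unfolding rop_eq_lop by (rule mem_lop_iff)

lemma rop_antimono: "A \<subseteq> B \<Longrightarrow> r B \<subseteq> r A"
  unfolding rop_eq_lop by (rule lop_antimono)

lemma rop_upclosed: "upclosed X le2 (r Y)"
  unfolding rop_eq_lop using quasiorder2 by (rule lop_upclosed)

lemma mem_stable_iff: "Y \<in> L \<longleftrightarrow> Y \<subseteq> X \<and> Y = l (r Y)"
  unfolding stable_sets_def by blast

lemma stable_upclosed: "Y \<in> L \<Longrightarrow> upclosed X le1 Y"
  using lop_upclosed[OF quasiorder1] mem_stable_iff by metis

lemma upclosed_subset_lop_rop: "upclosed X le1 W \<Longrightarrow> W \<subseteq> l (r W)"
  unfolding rop_eq_lop using quasiorder2 by (rule upclosed_subset_lop_lop)

lemma rop_subset_rop_lop: "r Y \<subseteq> r (l (r Y))"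
  unfolding rop_eq_lop using quasiorder1 rop_upclosed[unfolded rop_eq_lop]
  by (rule upclosed_subset_lop_lop)

lemma empty_stable: "{} \<in> L"
proof -
  have "r {} = X"
    by (auto simp: mem_rop_iff)
  moreover have "l X = {}"
    using quasiorder_on_refl[OF quasiorder1] by (force simp: mem_lop_iff)
  ultimately show ?thesis
    by (simp add: mem_stable_iff)
qed

lemma carrier_stable: "X \<in> L"
proof -
  have "r X = {}"
    using quasiorder_on_refl[OF quasiorder2] by (force simp: mem_rop_iff)
  moreover have "l {} = X"
    by (auto simp: mem_lop_iff)
  ultimately show ?thesis
    by (simp add: mem_stable_iff)
qed

lemma Int_stable:
  assumes "Y \<in> L" "Z \<in> L"
  shows "Y \<inter> Z \<in> L"
proof -
  have "l (r (Y \<inter> Z)) \<subseteq> l (r Y) \<inter> l (r Z)"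
    by (intro Int_greatest lop_antimono rop_antimono Int_lower1 Int_lower2)
  moreover have "upclosed X le1 (Y \<inter> Z)"
    using assms stable_upclosed unfolding upclosed_def by blast
  ultimately show ?thesis
    using assms upclosed_subset_lop_rop unfolding mem_stable_iff by blast
qed

lemma rop_join:
  assumes "Y \<in> L" "Z \<in> L"
  shows "r (join Y Z) = r (Y \<union> Z)"
proof
  show "r (Y \<union> Z) \<subseteq> r (join Y Z)"
    unfolding sjoin_def by (rule rop_subset_rop_lop)
  have "Y \<union> Z \<subseteq> join Y Z"
    unfolding sjoin_def using assms by (intro upclosed_subset_lop_rop upclosed_Un stable_upclosed)
  then show "r (join Y Z) \<subseteq> r (Y \<union> Z)"
    by (rule rop_antimono)
qed

lemma join_stable:
  assumes "Y \<in> L" "Z \<in> L"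
  shows "join Y Z \<in> L"
proof -
  have "l (r (join Y Z)) = join Y Z"
    using rop_join[OF assms] by (simp add: sjoin_def)
  then show ?thesis
    by (simp add: mem_stable_iff lop_subset sjoin_def)
qed

definition principal_pair :: "'a \<Rightarrow> 'a set set \<times> 'a set set" where
  "principal_pair x = ({Y \<in> L. x \<in> Y}, {Y \<in> L. x \<in> r Y})"

lemma principal_pair_filter_ideal_pair:
  assumes x: "x \<in> X"
  shows "filter_ideal_pair L (\<subseteq>) (\<inter>) join (principal_pair x)"
proof -
  have x_not_in_rop: "x \<notin> r Y" if "x \<in> Y" for Y
    using that x quasiorder_on_refl[OF quasiorder2] by (auto simp: mem_rop_iff)
  have "proper_filter L (\<subseteq>) (\<inter>) {Y \<in> L. x \<in> Y}"
    unfolding proper_filter_def lat_filter_def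
    using carrier_stable empty_stable Int_stable x by blast
  moreover have "proper_ideal L (\<subseteq>) join {Y \<in> L. x \<in> r Y}"
    unfolding proper_ideal_def lat_ideal_def
  proof (intro conjI ballI impI)
    show "{Y \<in> L. x \<in> r Y} \<noteq> {}"
      using empty_stable x by (auto simp: mem_rop_iff)
    show "{Y \<in> L. x \<in> r Y} \<noteq> L"
      using carrier_stable x x_not_in_rop by blast
    show "b \<in> {Y \<in> L. x \<in> r Y}" if "a \<in> {Y \<in> L. x \<in> r Y}" "b \<in> L" "b \<subseteq> a" for a b
      using that rop_antimono by blast
    show "join a b \<in> {Y \<in> L. x \<in> r Y}"
      if "a \<in> {Y \<in> L. x \<in> r Y}" "b \<in> {Y \<in> L. x \<in> r Y}" for a b
    proof -
      from that have "a \<in> L" "b \<in> L" "x \<in> r (a \<union> b)"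
        by (auto simp: mem_rop_iff)
      then show ?thesis
        using join_stable rop_join by simp
    qed
  qed blast
  ultimately show ?thesis
    unfolding filter_ideal_pair_def principal_pair_def using x_not_in_rop by auto
qed

lemma mem_rop_Int_up1:
  assumes "x \<in> X" "x \<notin> Y"
  shows "x \<in> r (Y \<inter> up X le1 x)"
proof -
  have "w \<notin> Y \<inter> up X le1 x" if "w \<in> X" "le2 x w" for w
  proof
    assume "w \<in> Y \<inter> up X le1 x"
    then have "w \<in> Y" "le1 x w"
      by (auto simp: mem_up_iff)
    with that assms le12_antisym[of x w] show False
      by auto
  qed
  with assms(1) show ?thesis
    by (simp add: mem_rop_iff)
qed

lemma principal_pair_mono1:
  "le1 x y \<Longrightarrow> x \<in> X \<Longrightarrow> y \<in> X \<Longrightarrow> can_le1 (principal_pair x) (principal_pair y)"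
  unfolding can_le1_def principal_pair_def using stable_upclosed upclosedD by fastforce

lemma principal_pair_mono2:
  "le2 x y \<Longrightarrow> x \<in> X \<Longrightarrow> y \<in> X \<Longrightarrow> can_le2 (principal_pair x) (principal_pair y)"
  unfolding can_le2_def principal_pair_def using rop_upclosed upclosedD by fastforce

end

locale separating_frame = doubly_ordered +
  assumes separation1: "\<forall>x\<in>X. \<forall>y\<in>X. \<not> le1 x y \<longrightarrow>
      (\<exists>z\<in>X. le1 y z \<and> (\<forall>w\<in>X. le1 x w \<longrightarrow> \<not> le2 z w))"
    and separation2: "\<forall>x\<in>X. \<forall>y\<in>X. \<not> le2 x y \<longrightarrow>
      (\<exists>z\<in>X. le2 y z \<and> (\<forall>w\<in>X. le2 x w \<longrightarrow> \<not> le1 z w))"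
begin

lemma up1_stable:
  assumes "x \<in> X"
  shows "up X le1 x \<in> L"
proof -
  have "l (r (up X le1 x)) = up X le1 x"
    unfolding rop_eq_lop using quasiorder1 quasiorder2 assms
    by (rule lop_lop_up) (use assms separation1 in blast)
  then show ?thesis
    by (simp add: mem_stable_iff up_subset)
qed

lemma rop_lop_up2:
  assumes "x \<in> X"
  shows "r (l (up X le2 x)) = up X le2 x"
  unfolding rop_eq_lop using quasiorder2 quasiorder1 assms
  by (rule lop_lop_up) (use assms separation2 in blast)

lemma lop_up2_stable: "x \<in> X \<Longrightarrow> l (up X le2 x) \<in> L"
  by (simp add: mem_stable_iff rop_lop_up2 lop_subset)

lemma mem_join_lop_up2:
  assumes x: "x \<in> X" and "x \<notin> r Y"
  shows "x \<in> join Y (l (up X le2 x))"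
proof -
  have "v \<notin> r (Y \<union> l (up X le2 x))" if v: "v \<in> X" "le1 x v" for v
  proof
    assume v_in: "v \<in> r (Y \<union> l (up X le2 x))"
    then have "v \<in> r (l (up X le2 x))"
      using rop_antimono by blast
    then have "v = x"
      using rop_lop_up2 x v le12_antisym by (auto simp: mem_up_iff)
    with v_in \<open>x \<notin> r Y\<close> show False
      using rop_antimono by blast
  qed
  with x show ?thesis
    unfolding sjoin_def mem_lop_iff by blast
qed

lemma up1_mem_principal_filter: "x \<in> X \<Longrightarrow> up X le1 x \<in> {Y \<in> L. x \<in> Y}"
  using up1_stable quasiorder_on_refl[OF quasiorder1] by (simp add: mem_up_iff)

lemma lop_up2_mem_principal_ideal: "x \<in> X \<Longrightarrow> l (up X le2 x) \<in> {Y \<in> L. x \<in> r Y}"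
  using lop_up2_stable rop_lop_up2 quasiorder_on_refl[OF quasiorder2] by (simp add: mem_up_iff)

lemma principal_pair_maximal:
  assumes x: "x \<in> X"
  shows "maximal_fi_pair L (\<subseteq>) (\<inter>) join (principal_pair x)"
proof -
  have "G \<inter> {Y \<in> L. x \<in> r Y} \<noteq> {}"
    if G: "proper_filter L (\<subseteq>) (\<inter>) G" "{Y \<in> L. x \<in> Y} \<subset> G" for G
  proof -
    have G_filter: "G \<subseteq> L" "\<forall>a\<in>G. \<forall>b\<in>G. a \<inter> b \<in> G"
      using G(1) unfolding proper_filter_def lat_filter_def by blast+
    obtain Y where Y: "Y \<in> G" "x \<notin> Y"
      using G(2) G_filter(1) by blast
    have "up X le1 x \<in> G"
      using G(2) up1_mem_principal_filter[OF x] by blast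
    then have "Y \<inter> up X le1 x \<in> G"
      using Y G_filter(2) by blast
    with G_filter(1) mem_rop_Int_up1[OF x Y(2)] show ?thesis
      by blast
  qed
  moreover have "{Y \<in> L. x \<in> Y} \<inter> J \<noteq> {}"
    if J: "proper_ideal L (\<subseteq>) join J" "{Y \<in> L. x \<in> r Y} \<subset> J" for J
  proof -
    have J_ideal: "J \<subseteq> L" "\<forall>a\<in>J. \<forall>b\<in>J. join a b \<in> J"
      using J(1) unfolding proper_ideal_def lat_ideal_def by blast+
    obtain Y where Y: "Y \<in> J" "x \<notin> r Y"
      using J(2) J_ideal(1) by blast
    have "l (up X le2 x) \<in> J"
      using J(2) lop_up2_mem_principal_ideal[OF x] by blast
    then have "join Y (l (up X le2 x)) \<in> J"
      using Y J_ideal(2) by blast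
    with J_ideal(1) mem_join_lop_up2[OF x Y(2)] show ?thesis
      by blast
  qed
  ultimately show ?thesis
    using principal_pair_filter_ideal_pair[OF x]
    unfolding maximal_fi_pair_def principal_pair_def by auto
qed

lemma inj_on_principal_pair: "inj_on principal_pair X"
proof (rule inj_onI)
  fix x y assume x: "x \<in> X" and y: "y \<in> X" and eq: "principal_pair x = principal_pair y"
  have "up X le1 x \<in> fst (principal_pair x)"
    using up1_mem_principal_filter[OF x] by (simp add: principal_pair_def)
  then have "y \<in> up X le1 x"
    unfolding eq by (simp add: principal_pair_def)
  have "l (up X le2 x) \<in> snd (principal_pair x)"
    using lop_up2_mem_principal_ideal[OF x] by (simp add: principal_pair_def)
  then have "y \<in> up X le2 x"
    unfolding eq using rop_lop_up2[OF x] by (simp add: principal_pair_def)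
  show "x = y"
    using le12_antisym x y \<open>y \<in> up X le1 x\<close> \<open>y \<in> up X le2 x\<close> by (simp add: mem_up_iff)
qed

end

theorem mainTheorem1:
  fixes X :: "'a set" and le1 le2 :: "'a \<Rightarrow> 'a \<Rightarrow> bool"
  assumes "lattice_frame X le1 le2"
  shows "\<exists>k. k ` X \<subseteq> canonical_points_of_complex_algebra X le1 le2 \<and> inj_on k X \<and>
           (\<forall>x\<in>X. \<forall>y\<in>X. le1 x y \<longrightarrow> can_le1 (k x) (k y)) \<and>
           (\<forall>x\<in>X. \<forall>y\<in>X. le2 x y \<longrightarrow> can_le2 (k x) (k y))"
proof -
  interpret separating_frame X le1 le2
    using assms unfolding lattice_frame_def separating_frame_def separating_frame_axioms_def
      doubly_ordered_def by blast
  show ?thesis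
  proof (intro exI[of _ principal_pair] conjI ballI impI)
    show "principal_pair ` X \<subseteq> canonical_points_of_complex_algebra X le1 le2"
      unfolding canonical_points_of_complex_algebra_def using principal_pair_maximal by blast
  qed (simp_all add: inj_on_principal_pair principal_pair_mono1 principal_pair_mono2)
qed

end
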